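(* Let $(a,b,c)$ be a standard Pythagorean triple. Then there exist polynomials $\mathcal{A}(q),\mathcal{B}(q),\mathcal{C}(q)\in\mathbb{Z}[q]$ such that: (0) they satisfy the $q$-deformed Pythagoras equation $$\mathcal{A}(q)^2+q\,\mathcal{B}(q)^2=\mathcal{C}(q)\,\mathcal{C}^*(q),\qquad\text{where } \mathcal{C}^*(q):=q^{\deg(\mathcal{C})}\,\mathcal{C}(q^{-1});$$ (1) $\mathcal{A},\mathcal{B},\mathcal{C}$ have positive integer coefficients; (2) $\mathcal{A}$ and $\mathcal{B}$ are self-reciprocal (palindromic), i.e. $q^{\deg P}P(q^{-1})=P(q)$ for $P\in\{\mathcal{A},\mathcal{B}\}$; (3) $\mathcal{A},\mathcal{B},\mathcal{C}$ and $\mathcal{C}^*$ are monic, i.e. their leading coefficient and their lowest-degree coefficient are both equal to $1$; and moreover $(\mathcal{A}(1),\mathcal{B}(1),\mathcal{C}(1))=(a,b,c)$.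
   Context: A Pythagorean triple is a triple $(a,b,c)$ of positive integers with $a^2+b^2=c^2$. It is called standard if either $\gcd(a,b,c)=1$ and $a$ is even, or $\gcd(a,b,c)=2$ and $a/2$ is odd. (The order matters: $a$ and $b$ are not interchangeable.) *)

theory Defs
  imports "HOL-Computational_Algebra.Polynomial"
begin

definition standard_pyth_triple :: "nat \<Rightarrow> nat \<Rightarrow> nat \<Rightarrow> bool" where
  "standard_pyth_triple a b c \<longleftrightarrow>
     a > 0 \<and> b > 0 \<and> c > 0 \<and> a^2 + b^2 = c^2 \<and>
     ((gcd a (gcd b c) = 1 \<and> even a) \<or> (gcd a (gcd b c) = 2 \<and> odd (a div 2)))"

text \<open>C*(q) = q^deg C * C(1/q): this is exactly reflect_poly (reversed coefficient list).\<close>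
abbreviation qstar :: "int poly \<Rightarrow> int poly" where
  "qstar p \<equiv> reflect_poly p"

definition low_coeff :: "int poly \<Rightarrow> int" where
  "low_coeff p = coeff p (LEAST i. coeff p i \<noteq> 0)"

definition monic2 :: "int poly \<Rightarrow> bool" where
  "monic2 p \<longleftrightarrow> lead_coeff p = 1 \<and> low_coeff p = 1"

definition self_reciprocal :: "int poly \<Rightarrow> bool" where
  "self_reciprocal p \<longleftrightarrow> reflect_poly p = p"

definition nonneg_coeffs :: "int poly \<Rightarrow> bool" where
  "nonneg_coeffs p \<longleftrightarrow> (\<forall>i. coeff p i \<ge> 0)"

end

theory Submission
  imports Defs "HOL-Computational_Algebra.Nth_Powers"
begin

text \<open>
  Every standard triple is Euclid's \<open>(2mn, m^2 - n^2, m^2 + n^2)\<close> with \<open>0 < n < m\<close>: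
  standardness is exactly what makes \<open>(c + b)/2\<close> and \<open>(c - b)/2\<close> coprime, hence squares.
  Write \<open>m = n + k\<close> and \<open>[j] = 1 + q + \<dots> + q^(j-1)\<close> (\<open>qint j\<close>). The triple is deformed to
  \<open>A = (1 + q^(k+1)) [m] [n]\<close>, \<open>B = [k] [m + n] = [m]^2 - q^k [n]^2\<close> and
  \<open>C = [m]^2 + q^(2k+1) [n]^2\<close>. As \<open>[m]^2\<close> and \<open>[n]^2\<close> are palindromes of degrees
  \<open>2m - 2\<close> and \<open>2n - 2\<close>, reflecting \<open>C\<close> gives \<open>C* = q [m]^2 + [n]^2\<close>, and the
  \<open>q\<close>-deformed Pythagoras equation becomes the ring identity
  \<open>((1 + xy) PQ)^2 + x (P^2 - y Q^2)^2 = (P^2 + x y^2 Q^2) (x P^2 + Q^2)\<close>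
  at \<open>x = q\<close>, \<open>y = q^k\<close>, \<open>P = [m]\<close>, \<open>Q = [n]\<close>.
\<close>

lemma pythagorean_triple_euclid:
  fixes h b c :: nat
  assumes pyth: "(2 * h) ^ 2 + b ^ 2 = c ^ 2" and "0 < h" "0 < b"
    and coprime: "coprime h (gcd b c)"
  obtains m n where "0 < n" "n < m" "h = m * n" "b + n ^ 2 = m ^ 2" "c = m ^ 2 + n ^ 2"
proof -
  have "0 < (2 * h) ^ 2"
    using \<open>0 < h\<close> by simp
  then have "b ^ 2 < c ^ 2"
    using pyth by linarith
  then have "b < c"
    by (simp add: power_less_imp_less_base)
  have "even c \<longleftrightarrow> even b"
    using arg_cong[OF pyth, of even] by simp
  then have "even (b + c)"
    by simp
  define x where "x = (c + b) div 2"
  define y where "y = (c - b) div 2"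
  have xy: "x + y = c" "x = y + b"
    using \<open>even (b + c)\<close> \<open>b < c\<close> unfolding x_def y_def by presburger+
  have "4 * (x * y) = 4 * h ^ 2"
    using pyth unfolding xy(1)[symmetric] xy(2) by (simp add: power2_eq_square algebra_simps)
  then have xy_square: "x * y = h ^ 2"
    by simp
  have "coprime x y"
  proof -
    have "gcd x y dvd c"
      using xy(1) by (metis dvd_add gcd_dvd1 gcd_dvd2)
    moreover have "gcd x y dvd b"
      using xy(2) by (metis dvd_add_right_iff gcd_dvd1 gcd_dvd2)
    moreover have "gcd x y ^ 2 dvd x * y"
      by (simp add: power2_eq_square mult_dvd_mono)
    then have "gcd x y dvd h"
      unfolding xy_square by simp
    ultimately have "gcd x y dvd gcd h (gcd b c)"
      by simp
    then have "gcd x y dvd 1"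
      using coprime by (simp only: coprime_iff_gcd_eq_1)
    then show ?thesis
      by (simp add: coprime_iff_gcd_eq_1)
  qed
  then have "is_nth_power 2 x" "is_nth_power 2 y"
    using xy_square is_nth_power_mult_coprime_nat_iff[of x y 2] by (auto simp: is_nth_power_def)
  then obtain m n where mn: "x = m ^ 2" "y = n ^ 2"
    by (auto simp: is_nth_power_def)
  have "(m * n) ^ 2 = h ^ 2"
    using xy_square mn by (simp add: power_mult_distrib)
  then have "h = m * n"
    by (simp add: power2_eq_iff)
  moreover have "0 < n"
    using xy_square mn \<open>0 < h\<close> by (cases "n = 0") auto
  moreover have "n ^ 2 < m ^ 2"
    using xy mn \<open>0 < b\<close> by simp
  then have "n < m"
    by (simp add: power_less_imp_less_base)
  ultimately show ?thesis
    using that mn xy by auto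
qed

lemma standard_pyth_triple_even_coprime:
  assumes "standard_pyth_triple a b c"
  shows "even a" "coprime (a div 2) (gcd b c)"
proof -
  have std: "(gcd a (gcd b c) = 1 \<and> even a) \<or> (gcd a (gcd b c) = 2 \<and> odd (a div 2))"
    using assms unfolding standard_pyth_triple_def by blast
  then show "even a"
    using gcd_dvd1[of a "gcd b c"] by (metis dvd_refl)
  define g where "g = gcd (a div 2) (gcd b c)"
  have "g dvd a div 2" "g dvd gcd b c"
    unfolding g_def by (rule gcd_dvd1, rule gcd_dvd2)
  moreover have "a div 2 dvd a"
    using \<open>even a\<close> by (auto elim: evenE)
  ultimately have g_dvd: "g dvd gcd a (gcd b c)"
    by (meson dvd_trans gcd_greatest)
  from std have "g = 1"
  proof
    assume "gcd a (gcd b c) = 1 \<and> even a"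
    then show "g = 1"
      using g_dvd by simp
  next
    assume "gcd a (gcd b c) = 2 \<and> odd (a div 2)"
    then have "g dvd 2" "odd g"
      using g_dvd \<open>g dvd a div 2\<close> by (auto dest: dvd_trans)
    then show "g = 1"
      using dvd_imp_le[of g 2] by (auto simp: le_Suc_eq numeral_2_eq_2)
  qed
  then show "coprime (a div 2) (gcd b c)"
    unfolding g_def by (simp add: coprime_iff_gcd_eq_1)
qed

lemma standard_pyth_triple_param:
  assumes "standard_pyth_triple a b c"
  obtains n k where "0 < n" "0 < k" "a = 2 * ((n + k) * n)" "b = k * (2 * n + k)"
    "c = (n + k) ^ 2 + n ^ 2"
proof -
  obtain h where h: "a = 2 * h"
    using standard_pyth_triple_even_coprime(1)[OF assms] by blast
  have "(2 * h) ^ 2 + b ^ 2 = c ^ 2" "0 < h" "0 < b" "coprime h (gcd b c)"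
    using assms standard_pyth_triple_even_coprime(2)[OF assms]
    unfolding h standard_pyth_triple_def by auto
  then obtain m n where mn: "0 < n" "n < m" "h = m * n" "b + n ^ 2 = m ^ 2" "c = m ^ 2 + n ^ 2"
    by (rule pythagorean_triple_euclid)
  define k where "k = m - n"
  have m: "m = n + k"
    using mn unfolding k_def by simp
  have "b = k * (2 * n + k)"
    using mn(4) unfolding m by (simp add: power2_eq_square algebra_simps)
  then show ?thesis
    using that mn h unfolding m by simp
qed

definition qint :: "nat \<Rightarrow> 'a::zero_neq_one poly" where
  "qint j = Poly (replicate j 1)"

lemma qint_0 [simp]: "qint 0 = 0"
  by (simp add: qint_def)

lemma qint_Suc: "qint (Suc j) = pCons 1 (qint j)"
  by (simp add: qint_def)

lemma coeff_qint: "coeff (qint j) i = (if i < j then 1 else 0)"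
  by (simp add: qint_def coeff_Poly_eq nth_default_def)

lemma degree_qint: "degree (qint j) = j - 1"
  by (cases j) (auto intro!: antisym degree_le le_degree simp: coeff_qint)

lemma qint_eq_0_iff [simp]: "qint j = 0 \<longleftrightarrow> j = 0"
  by (metis coeff_0 coeff_qint qint_0 zero_neq_one neq0_conv)

lemma reflect_poly_qint: "reflect_poly (qint j) = qint j"
proof -
  have "no_trailing ((=) 0) (replicate j (1::'a))"
    by (induction j) auto
  then show ?thesis
    unfolding qint_def by (simp add: reflect_poly_Poly_nz)
qed

lemma poly_qint_1: "poly (qint j) 1 = (of_nat j :: 'a::comm_semiring_1)"
  by (induction j) (simp_all add: qint_Suc)

lemma one_minus_X_mult_qint:
  "(1 - monom 1 1) * qint j = (1 - monom 1 j :: 'a::comm_ring_1 poly)"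
proof (induction j)
  case (Suc j)
  let ?x = "monom 1 1 :: 'a poly"
  have "(1 - ?x) * qint (Suc j) = (1 - ?x) + ?x * ((1 - ?x) * qint j)"
    by (simp add: qint_Suc monom_Suc monom_0 one_pCons algebra_simps)
  also have "\<dots> = 1 - monom 1 (Suc j)"
    unfolding Suc.IH by (simp add: right_diff_distrib mult_monom)
  finally show ?case .
qed simp

lemma qint_square_diff:
  "qint (n + k) ^ 2 - monom 1 k * qint n ^ 2 = (qint k * qint (2 * n + k) :: 'a::idom poly)"
proof -
  let ?x = "monom 1 1 :: 'a poly" and ?y = "monom 1 k :: 'a poly" and ?z = "monom 1 n :: 'a poly"
  have monoms: "monom 1 (n + k) = ?y * ?z" "monom 1 (2 * n + k) = ?y * ?z * ?z"
    by (simp_all add: mult_monom add.commute add.left_commute flip: mult_2)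
  have "(1 - ?x) ^ 2 * (qint (n + k) ^ 2 - ?y * qint n ^ 2)
      = ((1 - ?x) * qint (n + k)) ^ 2 - ?y * ((1 - ?x) * qint n) ^ 2"
    by (simp add: algebra_simps power2_eq_square)
  also have "\<dots> = (1 - ?y * ?z) ^ 2 - ?y * (1 - ?z) ^ 2"
    unfolding one_minus_X_mult_qint monoms ..
  also have "\<dots> = (1 - ?y) * (1 - ?y * ?z * ?z)"
    by (simp add: algebra_simps power2_eq_square)
  also have "\<dots> = ((1 - ?x) * qint k) * ((1 - ?x) * qint (2 * n + k))"
    unfolding one_minus_X_mult_qint monoms ..
  also have "\<dots> = (1 - ?x) ^ 2 * (qint k * qint (2 * n + k))"
    by (simp add: algebra_simps power2_eq_square)
  finally show ?thesis
    by (simp add: monom_eq_1_iff)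
qed

lemma degree_monom_1_mult:
  "q \<noteq> 0 \<Longrightarrow> degree (monom 1 d * q) = d + degree (q :: 'a::comm_semiring_1 poly)"
  by (rule antisym) (auto intro!: degree_le le_degree simp: coeff_monom_mult coeff_eq_0)

lemma reflect_poly_add_monom_mult:
  fixes p q :: "'a::comm_semiring_1 poly"
  assumes "q \<noteq> 0" "degree p < d + degree q" "e + degree p = d + degree q"
  shows "reflect_poly (p + monom 1 d * q) = monom 1 e * reflect_poly p + reflect_poly q"
proof -
  have deg: "degree (p + monom 1 d * q) = d + degree q"
    using assms by (simp add: degree_add_eq_right degree_monom_1_mult)
  show ?thesis
    by (rule poly_eqI)
      (use assms in \<open>auto simp: deg coeff_reflect_poly coeff_monom_mult coeff_eq_0
        add.commute[of "degree p"]\<close>)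
qed

lemma q_pythagoras_identity:
  fixes x y P Q :: "'a::comm_ring_1"
  shows "((1 + x * y) * (P * Q)) ^ 2 + x * (P ^ 2 - y * Q ^ 2) ^ 2
       = (P ^ 2 + x * y ^ 2 * Q ^ 2) * (x * P ^ 2 + Q ^ 2)"
  by (simp add: algebra_simps power2_eq_square)

lemma nonneg_coeffs_add: "nonneg_coeffs p \<Longrightarrow> nonneg_coeffs q \<Longrightarrow> nonneg_coeffs (p + q)"
  unfolding nonneg_coeffs_def by simp

lemma nonneg_coeffs_mult: "nonneg_coeffs p \<Longrightarrow> nonneg_coeffs q \<Longrightarrow> nonneg_coeffs (p * q)"
  unfolding nonneg_coeffs_def coeff_mult by (auto intro!: sum_nonneg)

lemma nonneg_coeffs_1: "nonneg_coeffs 1"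
  by (simp add: nonneg_coeffs_def coeff_1)

lemma nonneg_coeffs_power: "nonneg_coeffs p \<Longrightarrow> nonneg_coeffs (p ^ j)"
  by (induction j) (simp_all add: nonneg_coeffs_mult nonneg_coeffs_1)

lemma nonneg_coeffs_monom: "nonneg_coeffs (monom 1 j)"
  by (simp add: nonneg_coeffs_def coeff_monom)

lemma nonneg_coeffs_qint: "nonneg_coeffs (qint j)"
  by (simp add: nonneg_coeffs_def coeff_qint)

lemma low_coeff_eq_coeff_0: "coeff p 0 \<noteq> 0 \<Longrightarrow> low_coeff p = coeff p 0"
  unfolding low_coeff_def by (simp add: Least_eq_0)

lemma monic2I: "lead_coeff p = 1 \<Longrightarrow> coeff p 0 = 1 \<Longrightarrow> monic2 p"
  by (simp add: monic2_def low_coeff_eq_coeff_0)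

lemma monic2_reflect_polyI: "lead_coeff p = 1 \<Longrightarrow> coeff p 0 = 1 \<Longrightarrow> monic2 (reflect_poly p)"
  by (rule monic2I) (metis coeff_0_reflect_poly reflect_poly_reflect_poly zero_neq_one)+

definition qpyth_A :: "nat \<Rightarrow> nat \<Rightarrow> int poly" where
  "qpyth_A n k = (1 + monom 1 (k + 1)) * (qint (n + k) * qint n)"

definition qpyth_B :: "nat \<Rightarrow> nat \<Rightarrow> int poly" where
  "qpyth_B n k = qint k * qint (2 * n + k)"

definition qpyth_C :: "nat \<Rightarrow> nat \<Rightarrow> int poly" where
  "qpyth_C n k = qint (n + k) ^ 2 + monom 1 (2 * k + 1) * qint n ^ 2"

lemma qpyth_B_eq: "qpyth_B n k = qint (n + k) ^ 2 - monom 1 k * qint n ^ 2"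
  by (simp add: qpyth_B_def qint_square_diff)

lemma degree_qint_power2: "degree (qint j ^ 2 :: 'a::idom poly) = 2 * (j - 1)"
  by (cases "j = 0") (simp_all add: degree_power_eq degree_qint)

lemma reflect_poly_qint_power2: "reflect_poly (qint j ^ 2 :: 'a::idom poly) = qint j ^ 2"
  by (simp add: reflect_poly_power reflect_poly_qint)

lemma reflect_poly_qpyth_C:
  assumes "0 < n"
  shows "reflect_poly (qpyth_C n k) = monom 1 1 * qint (n + k) ^ 2 + qint n ^ 2"
  unfolding qpyth_C_def using assms
  by (subst reflect_poly_add_monom_mult[where e = 1])
     (simp_all add: degree_qint_power2 reflect_poly_qint_power2)

lemma qpyth_equation:
  assumes "0 < n"
  shows "qpyth_A n k ^ 2 + [:0, 1:] * qpyth_B n k ^ 2 = qpyth_C n k * reflect_poly (qpyth_C n k)"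
proof -
  have X: "[:0, 1:] = (monom 1 1 :: int poly)"
    by (simp add: monom_altdef)
  have monoms: "monom 1 (k + 1) = monom 1 1 * (monom 1 k :: int poly)"
    "monom 1 (2 * k + 1) = monom 1 1 * (monom 1 k :: int poly) ^ 2"
    by (simp_all add: mult_monom monom_power mult.commute)
  show ?thesis
    unfolding reflect_poly_qpyth_C[OF assms]
    unfolding qpyth_B_eq qpyth_A_def qpyth_C_def X monoms
    by (rule q_pythagoras_identity)
qed

lemma reflect_poly_one_plus_monom: "0 < d \<Longrightarrow> reflect_poly (1 + monom 1 d) = 1 + monom 1 d"
  using reflect_poly_add_monom_mult[where p = 1 and q = 1 and d = d and e = d]
  by (simp add: add.commute)

lemma self_reciprocal_qpyth_A: "self_reciprocal (qpyth_A n k)"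
  by (simp add: self_reciprocal_def qpyth_A_def reflect_poly_mult reflect_poly_qint
      reflect_poly_one_plus_monom)

lemma self_reciprocal_qpyth_B: "self_reciprocal (qpyth_B n k)"
  by (simp add: self_reciprocal_def qpyth_B_def reflect_poly_mult reflect_poly_qint)

lemma nonneg_coeffs_qpyth:
  "nonneg_coeffs (qpyth_A n k)" "nonneg_coeffs (qpyth_B n k)" "nonneg_coeffs (qpyth_C n k)"
  by (simp_all add: qpyth_A_def qpyth_B_def qpyth_C_def nonneg_coeffs_add nonneg_coeffs_mult
      nonneg_coeffs_power nonneg_coeffs_1 nonneg_coeffs_monom nonneg_coeffs_qint)

lemma monic2_qpyth_A:
  assumes "0 < n"
  shows "monic2 (qpyth_A n k)"
proof -
  have "degree (1 + monom 1 (k + 1) :: int poly) = k + 1"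
    by (simp add: degree_add_eq_right degree_monom_eq)
  then show ?thesis
    using assms
    by (intro monic2I) (simp_all add: qpyth_A_def lead_coeff_mult coeff_mult_0 coeff_qint degree_qint)
qed

lemma monic2_qpyth_B:
  assumes "0 < n" "0 < k"
  shows "monic2 (qpyth_B n k)"
  using assms
  by (intro monic2I) (simp_all add: qpyth_B_def lead_coeff_mult coeff_mult_0 coeff_qint degree_qint)

lemma monic2_qpyth_C:
  assumes "0 < n"
  shows "monic2 (qpyth_C n k)" "monic2 (reflect_poly (qpyth_C n k))"
proof -
  have "lead_coeff (qpyth_C n k) = coeff (reflect_poly (qpyth_C n k)) 0"
    by simp
  also have "\<dots> = 1"
    using assms by (simp add: reflect_poly_qpyth_C coeff_monom_mult coeff_0_power coeff_qint)
  finally have "lead_coeff (qpyth_C n k) = 1" .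
  moreover have "coeff (qpyth_C n k) 0 = 1"
    using assms by (simp add: qpyth_C_def coeff_monom_mult coeff_0_power coeff_qint)
  ultimately show "monic2 (qpyth_C n k)" "monic2 (reflect_poly (qpyth_C n k))"
    by (simp_all add: monic2I monic2_reflect_polyI)
qed

lemma poly_qpyth_1:
  "poly (qpyth_A n k) 1 = int (2 * ((n + k) * n))"
  "poly (qpyth_B n k) 1 = int (k * (2 * n + k))"
  "poly (qpyth_C n k) 1 = int ((n + k) ^ 2 + n ^ 2)"
  by (simp_all add: qpyth_A_def qpyth_B_def qpyth_C_def poly_qint_1 poly_monom)

theorem theorem1:
  fixes a b c :: nat
  assumes "standard_pyth_triple a b c"
  shows "\<exists>A B C :: int poly.
     A^2 + [:0, 1:] * B^2 = C * qstar C \<and>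
     nonneg_coeffs A \<and> nonneg_coeffs B \<and> nonneg_coeffs C \<and>
     self_reciprocal A \<and> self_reciprocal B \<and>
     monic2 A \<and> monic2 B \<and> monic2 C \<and> monic2 (qstar C) \<and>
     poly A 1 = int a \<and> poly B 1 = int b \<and> poly C 1 = int c"
proof -
  obtain n k where nk: "0 < n" "0 < k" "a = 2 * ((n + k) * n)" "b = k * (2 * n + k)"
    "c = (n + k) ^ 2 + n ^ 2"
    using standard_pyth_triple_param[OF assms] by blast
  show ?thesis
    unfolding nk(3-5)
    by (intro exI[of _ "qpyth_A n k"] exI[of _ "qpyth_B n k"] exI[of _ "qpyth_C n k"] conjI
        qpyth_equation nonneg_coeffs_qpyth self_reciprocal_qpyth_A self_reciprocal_qpyth_B
        monic2_qpyth_A monic2_qpyth_B monic2_qpyth_C poly_qpyth_1 nk(1,2))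
qed

end
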